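(* Let $k$ be an odd integer with $k\ge 5$, let $D$ be a strong $k$-quasi-transitive digraph with $\mathrm{diam}(D)\ge k+2$, let $u,v\in V(D)$ with $d(u,v)=k+2$, and let $P=x_0x_1\ldots x_{k+2}$ be a shortest $(u,v)$-path with $x_0=u$, $x_{k+2}=v$. Let $I=\{x\in V(D)\setminus V(P): x\Rightarrow V(P)\}$, $W=\{x\in V(D)\setminus V(P): V(P)\Rightarrow x\}$ and $B=V(D)\setminus(V(P)\cup I\cup W)$. If $D[V(P)]$ is a semicomplete digraph, then for any $x\in B$, either $x$ is adjacent to every vertex of $V(P)$, or there exist $x_t,x_s\in V(P)$ with $4\le t+1<s\le k-1$ such that $\{x_s,x_{s+1},\ldots,x_{k+2}\}\mapsto x\mapsto\{x_0,x_1,\ldots,x_t\}$.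
   Context: All digraphs are finite, without loops or multiple arcs (opposite arcs allowed). $x\rightarrow y$ means $xy\in A(D)$; $x,y$ are adjacent if $x\rightarrow y$ or $y\rightarrow x$. For disjoint vertex sets $X,Y$ (singletons identified with vertices): $X\rightarrow Y$ means every vertex of $X$ dominates every vertex of $Y$; $X\Rightarrow Y$ means there is no arc from $Y$ to $X$; $X\mapsto Y$ means both $X\rightarrow Y$ and $X\Rightarrow Y$. For $k\ge 2$, $D$ is $k$-quasi-transitive if for every path $x_0x_1\ldots x_k$ of length $k$, $x_0$ and $x_k$ are adjacent. $d(x,y)$ is the length of a shortest $(x,y)$-path, $\mathrm{diam}(D)=\max_{x,y}d(x,y)$. $D[S]$ is the induced subdigraph; a semicomplete digraph is one in which every two distinct vertices are adjacent. *)

theory Defs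
  imports Main
begin

definition digraph :: "'a set \<Rightarrow> ('a \<Rightarrow> 'a \<Rightarrow> bool) \<Rightarrow> bool" where
  "digraph V A \<longleftrightarrow> finite V \<and> (\<forall>x y. A x y \<longrightarrow> x \<in> V \<and> y \<in> V) \<and> (\<forall>x. \<not> A x x)"

definition adjacent :: "('a \<Rightarrow> 'a \<Rightarrow> bool) \<Rightarrow> 'a \<Rightarrow> 'a \<Rightarrow> bool" where
  "adjacent A x y \<longleftrightarrow> A x y \<or> A y x"

text \<open>A (directed) path is a nonempty list of distinct vertices of V with
  consecutive arcs; its length is the number of arcs, i.e. length - 1.\<close>

definition is_path :: "'a set \<Rightarrow> ('a \<Rightarrow> 'a \<Rightarrow> bool) \<Rightarrow> 'a list \<Rightarrow> bool" where
  "is_path V A p \<longleftrightarrow> p \<noteq> [] \<and> distinct p \<and> set p \<subseteq> V \<and>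
     (\<forall>i. Suc i < length p \<longrightarrow> A (p ! i) (p ! Suc i))"

definition is_path_from_to :: "'a set \<Rightarrow> ('a \<Rightarrow> 'a \<Rightarrow> bool) \<Rightarrow> 'a list \<Rightarrow> 'a \<Rightarrow> 'a \<Rightarrow> bool" where
  "is_path_from_to V A p x y \<longleftrightarrow> is_path V A p \<and> hd p = x \<and> last p = y"

definition k_quasi_transitive :: "nat \<Rightarrow> 'a set \<Rightarrow> ('a \<Rightarrow> 'a \<Rightarrow> bool) \<Rightarrow> bool" where
  "k_quasi_transitive k V A \<longleftrightarrow>
     (\<forall>p. is_path V A p \<and> length p = k + 1 \<longrightarrow> adjacent A (hd p) (last p))"

definition strong :: "'a set \<Rightarrow> ('a \<Rightarrow> 'a \<Rightarrow> bool) \<Rightarrow> bool" where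
  "strong V A \<longleftrightarrow> (\<forall>x\<in>V. \<forall>y\<in>V. \<exists>p. is_path_from_to V A p x y)"

text \<open>d(x,y): length of a shortest (x,y)-path (only meaningful if one exists).\<close>

definition dist :: "'a set \<Rightarrow> ('a \<Rightarrow> 'a \<Rightarrow> bool) \<Rightarrow> 'a \<Rightarrow> 'a \<Rightarrow> nat" where
  "dist V A x y = (LEAST n. \<exists>p. is_path_from_to V A p x y \<and> length p = n + 1)"

definition diam :: "'a set \<Rightarrow> ('a \<Rightarrow> 'a \<Rightarrow> bool) \<Rightarrow> nat" where
  "diam V A = Max {dist V A x y | x y. x \<in> V \<and> y \<in> V}"

definition semicomplete_on :: "('a \<Rightarrow> 'a \<Rightarrow> bool) \<Rightarrow> 'a set \<Rightarrow> bool" where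
  "semicomplete_on A S \<longleftrightarrow> (\<forall>x\<in>S. \<forall>y\<in>S. x \<noteq> y \<longrightarrow> adjacent A x y)"

text \<open>X \<Rightarrow> Y: no arc from Y to X.  X \<mapsto> Y: X \<rightarrow> Y and X \<Rightarrow> Y.\<close>

definition no_back :: "('a \<Rightarrow> 'a \<Rightarrow> bool) \<Rightarrow> 'a set \<Rightarrow> 'a set \<Rightarrow> bool" where
  "no_back A X Y \<longleftrightarrow> (\<forall>x\<in>X. \<forall>y\<in>Y. \<not> A y x)"

definition dominates :: "('a \<Rightarrow> 'a \<Rightarrow> bool) \<Rightarrow> 'a set \<Rightarrow> 'a set \<Rightarrow> bool" where
  "dominates A X Y \<longleftrightarrow> (\<forall>x\<in>X. \<forall>y\<in>Y. A x y)"

definition strictly_dominates :: "('a \<Rightarrow> 'a \<Rightarrow> bool) \<Rightarrow> 'a set \<Rightarrow> 'a set \<Rightarrow> bool" where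
  "strictly_dominates A X Y \<longleftrightarrow> dominates A X Y \<and> no_back A X Y"

end

theory Submission
  imports Defs
begin

text \<open>Fix a vertex x off the geodesic P = x_0 ... x_{k+2} and record for every index i
  whether x_i \<rightarrow> x and whether x \<rightarrow> x_i.  Minimality of P forbids x_i \<rightarrow> x \<rightarrow> x_j
  with j > i + 2, and since P has no forward chords while D[V(P)] is semicomplete, every
  x_j \<rightarrow> x_i with j \<ge> i + 2 is an arc.  Hence many index sequences of length k (runs
  forward, with at most one jump back) are paths, and attaching x to either end gives a path
  of length k whose ends must be adjacent by k-quasi-transitivity.  These constraints force
  the indices of the vertices not adjacent to x to form an interval [p, q] with 4 \<le> p and
  q \<le> k - 2, below which x has only out-neighbours and above which only in-neighbours.\<close>

lemma is_path_iff_successively: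
  "is_path V A p \<longleftrightarrow> p \<noteq> [] \<and> distinct p \<and> set p \<subseteq> V \<and> successively A p"
  unfolding is_path_def successively_conv_nth by simp

lemma is_path_append:
  assumes "is_path V A p" "is_path V A q" "set p \<inter> set q = {}" "A (last p) (hd q)"
  shows "is_path V A (p @ q)"
  using assms unfolding is_path_iff_successively successively_append_iff by auto

lemma is_path_Cons:
  assumes "is_path V A p" "x \<in> V" "x \<notin> set p" "A x (hd p)"
  shows "is_path V A (x # p)"
  using assms unfolding is_path_iff_successively successively_Cons by auto

lemma is_path_snoc:
  assumes "is_path V A p" "x \<in> V" "x \<notin> set p" "A (last p) x"
  shows "is_path V A (p @ [x])"
  using assms unfolding is_path_iff_successively successively_append_iff by auto

lemma is_path_take: "is_path V A p \<Longrightarrow> 0 < n \<Longrightarrow> is_path V A (take n p)"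
  unfolding is_path_def by (auto dest: in_set_takeD)

lemma is_path_drop: "is_path V A p \<Longrightarrow> n < length p \<Longrightarrow> is_path V A (drop n p)"
  unfolding is_path_def by (auto dest: in_set_dropD)

lemma is_path_map_nth:
  assumes "is_path V A p" "L \<noteq> []" "distinct L" "set L \<subseteq> {..<length p}"
    and "successively (\<lambda>i j. A (p ! i) (p ! j)) L"
  shows "is_path V A (map ((!) p) L)"
proof -
  have "inj_on ((!) p) (set L)"
    using assms(1,4) unfolding is_path_def inj_on_def by (metis lessThan_iff nth_eq_iff_index_eq subsetD)
  moreover have "set (map ((!) p) L) \<subseteq> V"
    using assms(1,4) unfolding is_path_def by (auto intro: nth_mem)
  ultimately show ?thesis
    using assms(2,3,5) unfolding is_path_iff_successively by (simp add: distinct_map successively_map)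
qed

lemma dist_less_length: "is_path_from_to V A p x y \<Longrightarrow> dist V A x y < length p"
proof -
  assume p: "is_path_from_to V A p x y"
  then have "p \<noteq> []" by (simp add: is_path_from_to_def is_path_def)
  with p have "\<exists>q. is_path_from_to V A q x y \<and> length q = (length p - 1) + 1" by auto
  then have "dist V A x y \<le> length p - 1" unfolding dist_def by (rule Least_le)
  then show ?thesis using \<open>p \<noteq> []\<close> by (cases p) auto
qed

lemma in_set_conv_nth_atMost: "length xs = Suc n \<Longrightarrow> y \<in> set xs \<longleftrightarrow> (\<exists>i \<le> n. y = xs ! i)"
  by (auto simp: in_set_conv_nth less_Suc_eq_le)

lemma quasi_transitive_Cons_adjacent:
  assumes "k_quasi_transitive k V A" "is_path V A p" "length p = k"
    and "x \<in> V" "x \<notin> set p" "A x (hd p)"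
  shows "adjacent A x (last p)"
proof -
  have "is_path V A (x # p)" using is_path_Cons assms(2,4-6) .
  moreover have "p \<noteq> []" using assms(2) by (simp add: is_path_def)
  ultimately show ?thesis using assms(1,3) unfolding k_quasi_transitive_def by fastforce
qed

lemma quasi_transitive_snoc_adjacent:
  assumes "k_quasi_transitive k V A" "is_path V A p" "length p = k"
    and "x \<in> V" "x \<notin> set p" "A (last p) x"
  shows "adjacent A (hd p) x"
proof -
  have "is_path V A (p @ [x])" using is_path_snoc assms(2,4-6) .
  moreover have "p \<noteq> []" using assms(2) by (simp add: is_path_def)
  ultimately show ?thesis using assms(1,3) unfolding k_quasi_transitive_def by fastforce
qed

text \<open>The allowed steps are exactly the arcs of a semicomplete geodesic between its
  vertices: one step forward, or a jump back by at least two.\<close>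

definition index_walk :: "nat \<Rightarrow> nat list \<Rightarrow> bool" where
  "index_walk n L \<longleftrightarrow> L \<noteq> [] \<and> distinct L \<and> set L \<subseteq> {..n} \<and>
     successively (\<lambda>i j. j = Suc i \<or> j + 2 \<le> i) L"

lemma index_walk_upt: "a < b \<Longrightarrow> b \<le> Suc n \<Longrightarrow> index_walk n [a..<b]"
  unfolding index_walk_def successively_conv_nth by auto

lemma index_walk_append:
  assumes "index_walk n L" "index_walk n M" "set L \<inter> set M = {}" "hd M + 2 \<le> last L"
  shows "index_walk n (L @ M)"
  using assms unfolding index_walk_def successively_append_iff by auto

lemma backward_index_walk:
  assumes "b < a" "a \<le> n" "a + k \<le> n + b + 2" "3 \<le> k"
  shows "\<exists>L. index_walk n L \<and> length L = k \<and> hd L = a \<and> last L = b"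
proof -
  define e where "e = min n (a + k - 2)"
  define c where "c = e + b + 2 - a - k"
  have bounds: "a \<le> e" "e \<le> n" "c \<le> b" "c + 2 \<le> e" "(Suc e - a) + (Suc b - c) = k"
    using assms unfolding e_def c_def by auto
  let ?L = "[a..<Suc e] @ [c..<Suc b]"
  have "index_walk n ?L"
    by (rule index_walk_append) (use assms(1) bounds in \<open>auto intro: index_walk_upt simp del: upt_Suc\<close>)
  moreover have "length ?L = k" "hd ?L = a" "last ?L = b"
    using bounds by (simp_all del: upt_Suc)
  ultimately show ?thesis by blast
qed

text \<open>In i and Out i stand for x_i \<rightarrow> x and x \<rightarrow> x_i, for a vertex x off a geodesic
  x_0 ... x_{k+2}; the assumptions are what minimality of the geodesic and
  k-quasi-transitivity along index walks yield.\<close>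

locale neighbour_pattern =
  fixes k :: nat and In Out :: "nat \<Rightarrow> bool"
  assumes k_ge_5: "5 \<le> k"
    and in_out_close: "\<lbrakk>In i; Out j; i \<le> k + 2; j \<le> k + 2\<rbrakk> \<Longrightarrow> j \<le> i + 2"
    and out_forward: "\<lbrakk>Out a; a \<le> 3\<rbrakk> \<Longrightarrow> In (a + k - 1) \<or> Out (a + k - 1)"
    and in_backward: "\<lbrakk>In (b + k - 1); b \<le> 3\<rbrakk> \<Longrightarrow> In b \<or> Out b"
    and out_back: "\<lbrakk>Out a; b < a; a \<le> b + 4; a \<le> k + 2\<rbrakk> \<Longrightarrow> In b \<or> Out b"
    and in_ahead: "\<lbrakk>In b; b < a; a \<le> b + 4; a \<le> k + 2\<rbrakk> \<Longrightarrow> In a \<or> Out a"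
begin

abbreviation adj :: "nat \<Rightarrow> bool" where
  "adj i \<equiv> In i \<or> Out i"

lemma reversed: "neighbour_pattern k (\<lambda>i. Out (k + 2 - i)) (\<lambda>i. In (k + 2 - i))"
proof unfold_locales
  show "5 \<le> k" by (fact k_ge_5)
next
  fix i j assume "Out (k + 2 - i)" "In (k + 2 - j)" "i \<le> k + 2" "j \<le> k + 2"
  then show "j \<le> i + 2" using in_out_close[of "k + 2 - j" "k + 2 - i"] by simp
next
  fix a assume "In (k + 2 - a)" "a \<le> 3"
  then show "Out (k + 2 - (a + k - 1)) \<or> In (k + 2 - (a + k - 1))"
    using in_backward[of "3 - a"] k_ge_5 by (auto simp: add.commute)
next
  fix b assume "Out (k + 2 - (b + k - 1))" "b \<le> 3"
  then show "Out (k + 2 - b) \<or> In (k + 2 - b)"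
    using out_forward[of "3 - b"] k_ge_5 by (auto simp: add.commute)
next
  fix a b assume "In (k + 2 - a)" "b < a" "a \<le> b + 4" "a \<le> k + 2"
  then show "Out (k + 2 - b) \<or> In (k + 2 - b)"
    using in_ahead[of "k + 2 - a" "k + 2 - b"] by auto
next
  fix a b assume "Out (k + 2 - b)" "b < a" "a \<le> b + 4" "a \<le> k + 2"
  then show "Out (k + 2 - a) \<or> In (k + 2 - a)"
    using out_back[of "k + 2 - b" "k + 2 - a"] by auto
qed

lemma in_only_after_gap:
  assumes "\<not> adj h" "adj (Suc h)" "h < j" "j \<le> k + 2"
  shows "In j \<and> \<not> Out j"
proof -
  have no_out: "\<not> Out l" if "h < l" "l \<le> k + 2" for l
  proof (cases "l \<le> h + 4")
    case True
    then show ?thesis using out_back[of l h] assms(1) that by auto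
  next
    case False
    have "\<not> Out (Suc h)" using out_back[of "Suc h" h] assms that by auto
    then have "In (Suc h)" using assms(2) by simp
    then show ?thesis using in_out_close[of "Suc h" l] False that by auto
  qed
  have "Suc h \<le> j" using assms(3) by simp
  then have "In j"
  proof (induction j rule: dec_induct)
    case base
    show ?case using assms(2-4) no_out[of "Suc h"] by simp
  next
    case (step n)
    then show ?case using in_ahead[of n "Suc n"] no_out[of "Suc n"] \<open>j \<le> k + 2\<close> by simp
  qed
  then show ?thesis using no_out assms(3,4) by blast
qed

lemma in_only_above_gap:
  assumes "\<not> adj h" "h < j" "adj j" "j \<le> l" "l \<le> k + 2"
  shows "In l \<and> \<not> Out l"
proof -
  have "Suc h \<le> j" using assms(2) by simp
  then show ?thesis using assms(3,4)
  proof (induction j rule: dec_induct)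
    case base
    show ?case using in_only_after_gap[OF assms(1) base(1)] base(2) assms(5) by simp
  next
    case (step n)
    show ?case
    proof (cases "adj n")
      case True
      then show ?thesis using step by simp
    next
      case False
      show ?thesis using in_only_after_gap[OF False step.prems(1)] step.prems(2) assms(5) by simp
    qed
  qed
qed

lemma out_only_below_gap:
  assumes "\<not> adj h" "j < h" "adj j" "l \<le> j" "h \<le> k + 2"
  shows "Out l \<and> \<not> In l"
proof -
  interpret rev: neighbour_pattern k "\<lambda>i. Out (k + 2 - i)" "\<lambda>i. In (k + 2 - i)"
    by (fact reversed)
  have "Out (k + 2 - (k + 2 - l)) \<and> \<not> In (k + 2 - (k + 2 - l))"
    using assms by (intro rev.in_only_above_gap[of "k + 2 - h" "k + 2 - j"]) auto
  then show ?thesis using assms by simp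
qed

lemma first_gap_ge_4:
  assumes "\<not> adj p" "\<forall>i < p. adj i" "adj a" "a \<le> k + 2"
  shows "4 \<le> p"
proof (rule ccontr)
  assume "\<not> 4 \<le> p"
  then have "p \<le> 3" by simp
  obtain j where "adj j" "p < j" "j \<le> p + k - 1"
  proof (cases "p = 0")
    case True
    then have "0 < a" using assms(1,3) by (cases a) auto
    then have "In (3 + k - 1)" using in_only_above_gap[of 0 a "k + 2"] assms True by simp
    then have "adj 3" using in_backward[of 3] by simp
    then show ?thesis using that[of 3] True k_ge_5 by simp
  next
    case False
    then have "Out 0" using out_only_below_gap[of p "p - 1" 0] assms(1,2) \<open>p \<le> 3\<close> k_ge_5 by simp
    then have "adj (0 + k - 1)" using out_forward[of 0] by simp
    then show ?thesis using that[of "k - 1"] \<open>p \<le> 3\<close> False k_ge_5 by simp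
  qed
  then have "In (p + k - 1)" using in_only_above_gap[of p j "p + k - 1"] assms(1) \<open>p \<le> 3\<close> by simp
  then show False using in_backward[of p] \<open>p \<le> 3\<close> assms(1) by simp
qed

lemma last_gap_le_k_minus_2:
  assumes "\<not> adj q" "q \<le> k + 2" "\<forall>i. q < i \<and> i \<le> k + 2 \<longrightarrow> adj i" "adj a" "a \<le> k + 2"
  shows "q \<le> k - 2"
proof -
  interpret rev: neighbour_pattern k "\<lambda>i. Out (k + 2 - i)" "\<lambda>i. In (k + 2 - i)"
    by (fact reversed)
  have "\<forall>i < k + 2 - q. rev.adj i"
  proof (intro allI impI)
    fix i assume "i < k + 2 - q"
    then have "q < k + 2 - i" by linarith
    then show "rev.adj i" using assms(3) by auto
  qed
  then have "4 \<le> k + 2 - q" using assms by (intro rev.first_gap_ge_4[of _ "k + 2 - a"]) auto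
  then show ?thesis by simp
qed

lemma nonadjacent_split:
  assumes "adj a" "a \<le> k + 2" "\<not> adj g" "g \<le> k + 2"
  shows "\<exists>t s. 4 \<le> t + 1 \<and> t + 1 < s \<and> s \<le> k - 1 \<and>
    (\<forall>l. s \<le> l \<and> l \<le> k + 2 \<longrightarrow> In l \<and> \<not> Out l) \<and> (\<forall>l \<le> t. Out l \<and> \<not> In l)"
proof -
  define G where "G = {i. i \<le> k + 2 \<and> \<not> adj i}"
  have G: "finite G" "G \<noteq> {}" unfolding G_def using assms(3,4) by auto
  define p where "p = Min G"
  define q where "q = Max G"
  have p: "p \<le> k + 2" "\<not> adj p" and q: "q \<le> k + 2" "\<not> adj q"
    using Min_in[OF G] Max_in[OF G] unfolding p_def q_def G_def by auto
  have "p \<le> q" using G Min_in Max_ge unfolding p_def q_def by blast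
  have before_p: "adj i" if "i < p" for i
    using Min_le[OF G(1), of i] that p unfolding p_def G_def by fastforce
  have after_q: "adj i" if "q < i" "i \<le> k + 2" for i
    using Max_ge[OF G(1), of i] that unfolding q_def G_def by fastforce
  have "4 \<le> p" using first_gap_ge_4 p(2) before_p assms(1,2) by blast
  have "q \<le> k - 2" using last_gap_le_k_minus_2 q after_q assms(1,2) by blast
  have "Out l \<and> \<not> In l" if "l < p" for l
    using out_only_below_gap[of p "p - 1" l] before_p[of "p - 1"] that p by simp
  moreover have "In l \<and> \<not> Out l" if "q < l" "l \<le> k + 2" for l
    using in_only_above_gap[of q "q + 1" l] after_q[of "q + 1"] that q by simp
  ultimately show ?thesis
    using \<open>4 \<le> p\<close> \<open>p \<le> q\<close> \<open>q \<le> k - 2\<close> k_ge_5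
    by (intro exI[of _ "p - 1"] exI[of _ "q + 1"]) auto
qed

end

locale geodesic =
  fixes V :: "'a set" and A :: "'a \<Rightarrow> 'a \<Rightarrow> bool" and P :: "'a list"
  assumes path: "is_path V A P"
    and shortest: "length P = dist V A (hd P) (last P) + 1"
begin

lemma distinct_vertices: "distinct P"
  using path by (simp add: is_path_def)

lemma forward_arc: "Suc i < length P \<Longrightarrow> A (P ! i) (P ! Suc i)"
  using path by (simp add: is_path_def)

lemma shortcut_length:
  assumes "i < j" "j < length P" "is_path V A (take (Suc i) P @ M @ drop j P)"
  shows "j \<le> Suc i + length M"
proof -
  have "is_path_from_to V A (take (Suc i) P @ M @ drop j P) (hd P) (last P)"
    using assms path unfolding is_path_from_to_def is_path_def by auto
  then have "length P \<le> length (take (Suc i) P @ M @ drop j P)"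
    using dist_less_length shortest by fastforce
  then show ?thesis using assms(1,2) by simp
qed

lemma prefix_suffix_paths:
  assumes "i < j" "j < length P"
  shows "is_path V A (take (Suc i) P)" "is_path V A (drop j P)"
    and "set (take (Suc i) P) \<inter> set (drop j P) = {}"
    and "last (take (Suc i) P) = P ! i" "hd (drop j P) = P ! j"
proof -
  show "is_path V A (take (Suc i) P)" using path by (simp add: is_path_take)
  show "is_path V A (drop j P)" using path assms(2) by (rule is_path_drop)
  show "set (take (Suc i) P) \<inter> set (drop j P) = {}"
    using distinct_vertices assms(1) by (simp add: set_take_disj_set_drop_if_distinct)
  show "last (take (Suc i) P) = P ! i" using assms by (simp add: take_Suc_conv_app_nth)
  show "hd (drop j P) = P ! j" using assms(2) by (rule hd_drop_conv_nth)
qed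

lemma no_forward_chord:
  assumes "i + 2 \<le> j" "j < length P"
  shows "\<not> A (P ! i) (P ! j)"
proof
  assume "A (P ! i) (P ! j)"
  then have "is_path V A (take (Suc i) P @ [] @ drop j P)"
    using prefix_suffix_paths[of i j] assms by (simp add: is_path_append)
  then show False using shortcut_length[of i j "[]"] assms by simp
qed

lemma detour_span:
  assumes "x \<in> V" "x \<notin> set P" "A (P ! i) x" "A x (P ! j)" "i < length P" "j < length P"
  shows "j \<le> i + 2"
proof (rule ccontr)
  assume "\<not> j \<le> i + 2"
  then have "i < j" by simp
  note paths = prefix_suffix_paths[OF \<open>i < j\<close> assms(6)]
  have "is_path V A (x # drop j P)"
    using paths assms \<open>\<not> j \<le> i + 2\<close> by (auto intro: is_path_Cons dest: in_set_dropD)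
  moreover have "set (take (Suc i) P) \<inter> set (x # drop j P) = {}"
    using paths(3) assms(2) by (auto dest: in_set_takeD)
  ultimately have "is_path V A (take (Suc i) P @ [x] @ drop j P)"
    using paths assms(3) \<open>\<not> j \<le> i + 2\<close> by (simp add: is_path_append)
  then show False using shortcut_length[of i j "[x]"] assms \<open>\<not> j \<le> i + 2\<close> by simp
qed

end

locale semicomplete_geodesic = geodesic +
  assumes semicomplete: "semicomplete_on A (set P)"
begin

lemma backward_arc:
  assumes "i + 2 \<le> j" "j < length P"
  shows "A (P ! j) (P ! i)"
proof -
  have "P ! i \<noteq> P ! j" using distinct_vertices assms by (simp add: nth_eq_iff_index_eq)
  then have "adjacent A (P ! j) (P ! i)"
    using semicomplete assms unfolding semicomplete_on_def by simp
  then show ?thesis using no_forward_chord[OF assms] unfolding adjacent_def by blast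
qed

lemma index_walk_in_range: "index_walk (length P - 1) L \<Longrightarrow> set L \<subseteq> {..<length P}"
proof -
  have "0 < length P" using path by (simp add: is_path_def)
  then have "{..length P - 1} = {..<length P}" using lessThan_Suc_atMost[of "length P - 1"] by simp
  then show "index_walk (length P - 1) L \<Longrightarrow> set L \<subseteq> {..<length P}"
    unfolding index_walk_def by simp
qed

lemma is_path_index_walk:
  assumes "index_walk (length P - 1) L"
  shows "is_path V A (map ((!) P) L)"
proof (rule is_path_map_nth[OF path])
  show "set L \<subseteq> {..<length P}" using assms by (rule index_walk_in_range)
  have "successively (\<lambda>i j. j = Suc i \<or> j + 2 \<le> i) L"
    using assms unfolding index_walk_def by simp
  then show "successively (\<lambda>i j. A (P ! i) (P ! j)) L"
  proof (rule successively_mono)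
    fix i j assume "i \<in> set L" "j \<in> set L" "j = Suc i \<or> j + 2 \<le> i"
    with index_walk_in_range[OF assms] show "A (P ! i) (P ! j)"
      using forward_arc backward_arc by auto
  qed
qed (use assms in \<open>auto simp: index_walk_def\<close>)

lemma adjacent_last_of_walk:
  assumes "k_quasi_transitive k V A" "index_walk (length P - 1) L" "length L = k"
    and "x \<in> V" "x \<notin> set P" "A x (P ! hd L)"
  shows "adjacent A x (P ! last L)"
proof -
  have "L \<noteq> []" using assms(2) by (simp add: index_walk_def)
  moreover have "x \<notin> set (map ((!) P) L)" using index_walk_in_range[OF assms(2)] assms(5) by auto
  ultimately show ?thesis
    using quasi_transitive_Cons_adjacent[OF assms(1) is_path_index_walk[OF assms(2)]] assms(3,4,6)
    by (simp add: hd_map last_map)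
qed

lemma adjacent_hd_of_walk:
  assumes "k_quasi_transitive k V A" "index_walk (length P - 1) L" "length L = k"
    and "x \<in> V" "x \<notin> set P" "A (P ! last L) x"
  shows "adjacent A (P ! hd L) x"
proof -
  have "L \<noteq> []" using assms(2) by (simp add: index_walk_def)
  moreover have "x \<notin> set (map ((!) P) L)" using index_walk_in_range[OF assms(2)] assms(5) by auto
  ultimately show ?thesis
    using quasi_transitive_snoc_adjacent[OF assms(1) is_path_index_walk[OF assms(2)]] assms(3,4,6)
    by (simp add: hd_map last_map)
qed

lemma neighbour_pattern_of_outside_vertex:
  assumes qt: "k_quasi_transitive k V A" and len: "length P = k + 3" and k: "5 \<le> k"
    and x: "x \<in> V" "x \<notin> set P"
  shows "neighbour_pattern k (\<lambda>i. A (P ! i) x) (\<lambda>i. A x (P ! i))"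
proof unfold_locales
  show "5 \<le> k" by (fact k)
next
  fix i j assume "A (P ! i) x" "A x (P ! j)" "i \<le> k + 2" "j \<le> k + 2"
  then show "j \<le> i + 2" using detour_span x len by simp
next
  fix a assume "A x (P ! a)" "a \<le> 3"
  have "index_walk (length P - 1) [a..<a + k]" using len \<open>a \<le> 3\<close> k by (intro index_walk_upt) auto
  then have "adjacent A x (P ! last [a..<a + k])"
    by (rule adjacent_last_of_walk[OF qt _ _ x]) (use \<open>A x (P ! a)\<close> k in simp_all)
  then show "A (P ! (a + k - 1)) x \<or> A x (P ! (a + k - 1))" unfolding adjacent_def using k by auto
next
  fix b assume "A (P ! (b + k - 1)) x" "b \<le> 3"
  have "index_walk (length P - 1) [b..<b + k]" using len \<open>b \<le> 3\<close> k by (intro index_walk_upt) auto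
  then have "adjacent A (P ! hd [b..<b + k]) x"
    by (rule adjacent_hd_of_walk[OF qt _ _ x]) (use \<open>A (P ! (b + k - 1)) x\<close> k in simp_all)
  then show "A (P ! b) x \<or> A x (P ! b)" unfolding adjacent_def using k by auto
next
  fix a b assume "A x (P ! a)" "b < a" "a \<le> b + 4" "a \<le> k + 2"
  then obtain L where "index_walk (length P - 1) L" "length L = k" "hd L = a" "last L = b"
    using backward_index_walk[of b a "length P - 1" k] len k by auto
  then have "adjacent A x (P ! b)" using adjacent_last_of_walk[OF qt _ _ x] \<open>A x (P ! a)\<close> by auto
  then show "A (P ! b) x \<or> A x (P ! b)" unfolding adjacent_def by auto
next
  fix a b assume "A (P ! b) x" "b < a" "a \<le> b + 4" "a \<le> k + 2"
  then obtain L where "index_walk (length P - 1) L" "length L = k" "hd L = a" "last L = b"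
    using backward_index_walk[of b a "length P - 1" k] len k by auto
  then have "adjacent A (P ! a) x" using adjacent_hd_of_walk[OF qt _ _ x] \<open>A (P ! b) x\<close> by auto
  then show "A (P ! a) x \<or> A x (P ! a)" unfolding adjacent_def by auto
qed

lemma outside_vertex_dichotomy:
  assumes "k_quasi_transitive k V A" "length P = k + 3" "5 \<le> k"
    and x: "x \<in> V" "x \<notin> set P" and "y \<in> set P" "A y x"
  shows "(\<forall>y\<in>set P. adjacent A x y) \<or>
    (\<exists>t s. 4 \<le> t + 1 \<and> t + 1 < s \<and> s \<le> k - 1 \<and>
       strictly_dominates A {P ! i | i. s \<le> i \<and> i \<le> k + 2} {x} \<and>
       strictly_dominates A {x} {P ! i | i. i \<le> t})"
proof (cases "\<forall>y\<in>set P. adjacent A x y")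
  case False
  interpret neighbour_pattern k "\<lambda>i. A (P ! i) x" "\<lambda>i. A x (P ! i)"
    using neighbour_pattern_of_outside_vertex[OF assms(1-3) x] .
  have P_nth: "z \<in> set P \<longleftrightarrow> (\<exists>i \<le> k + 2. z = P ! i)" for z
    using assms(2) by (simp add: in_set_conv_nth_atMost)
  obtain a where a: "a \<le> k + 2" "A (P ! a) x" using assms(6,7) unfolding P_nth by blast
  obtain z where "z \<in> set P" "\<not> adjacent A x z" using False by blast
  then obtain g where "g \<le> k + 2" "\<not> adj g" unfolding P_nth adjacent_def by blast
  then obtain t s where ts: "4 \<le> t + 1" "t + 1 < s" "s \<le> k - 1"
    and late: "\<forall>l. s \<le> l \<and> l \<le> k + 2 \<longrightarrow> A (P ! l) x \<and> \<not> A x (P ! l)"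
    and early: "\<forall>l \<le> t. A x (P ! l) \<and> \<not> A (P ! l) x"
    using nonadjacent_split[of a g] a by blast
  have "strictly_dominates A {P ! i | i. s \<le> i \<and> i \<le> k + 2} {x}"
    using late unfolding strictly_dominates_def dominates_def no_back_def by auto
  moreover have "strictly_dominates A {x} {P ! i | i. i \<le> t}"
    using early unfolding strictly_dominates_def dominates_def no_back_def by auto
  ultimately show ?thesis using ts by blast
qed simp

end

theorem lemma2p11:
  fixes V :: "'a set" and A :: "'a \<Rightarrow> 'a \<Rightarrow> bool" and k :: nat
    and u v :: 'a and P :: "'a list"
  assumes "odd k" and "k \<ge> 5"
    and "digraph V A" and "strong V A" and "k_quasi_transitive k V A"
    and "diam V A \<ge> k + 2"
    and "u \<in> V" and "v \<in> V" and "dist V A u v = k + 2"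
    and "is_path_from_to V A P u v" and "length P = dist V A u v + 1"
    and "semicomplete_on A (set P)"
  shows "let I = {x \<in> V - set P. no_back A {x} (set P)};
             W = {x \<in> V - set P. no_back A (set P) {x}};
             B = V - (set P \<union> I \<union> W)
         in \<forall>x\<in>B. (\<forall>y\<in>set P. adjacent A x y) \<or>
              (\<exists>t s. 4 \<le> t + 1 \<and> t + 1 < s \<and> s \<le> k - 1 \<and>
                 strictly_dominates A {P ! i | i. s \<le> i \<and> i \<le> k + 2} {x} \<and>
                 strictly_dominates A {x} {P ! i | i. i \<le> t})"
proof -
  interpret semicomplete_geodesic V A P
    using assms(10-12) by unfold_locales (auto simp: is_path_from_to_def)
  have "length P = k + 3" using assms(9,11) by simp
  then show ?thesis
    unfolding Let_def no_back_def
    using outside_vertex_dichotomy[OF assms(5) _ assms(2)] by blast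
qed

end
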